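(* Let $p\ge1$ and let $x_0,x_1,\dots,x_p,y_1,\dots,y_p\in\mathbb{C}$ be pairwise distinct and all different from $1$. For $n,k\in\{0,1,\dots,p\}$ define $$B_{n,k}=\prod_{i=1}^{p}\frac{1-x_i}{1-y_i}+\sum_{j=1}^{p}\frac{(1-x_n)(1-x_k)(x_0-y_j)(y_j-x_j)}{(1-y_j)(1-x_0)(y_j-x_n)(y_j-x_k)}\prod_{\substack{i=1\\ i\ne j}}^{p}\frac{x_i-y_j}{y_i-y_j}.$$ Then $$B_{n,k}=\delta_{n,k}\,\frac{(x_k-1)\prod_{i=0,\,i\ne k}^{p}(x_k-x_i)}{(x_0-1)\prod_{i=1}^{p}(x_k-y_i)},$$ where $\delta_{n,k}$ is the Kronecker delta. *)

theory Defs
  imports Complex_Main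
begin

end

theory Submission
  imports Defs "HOL-Computational_Algebra.Polynomial"
begin

(* With P(z) = (prod i=0..p. z - x i) and F(z) = P(z) / ((z - x n) (z - x k)), flipping the sign
   of numerator and denominator in every factor of the inner products shows that B(n,k) is
   (1 - x n) (1 - x k) / (1 - x 0) times the divided difference of F over the p + 1 nodes
   1, y 1, ..., y p.  For n \<noteq> k, F agrees on the nodes with a polynomial of degree p - 1,
   so this divided difference vanishes.  For n = k, F(z) = Q(z) / (z - x k) with
   Q(z) = P(z) / (z - x k) of degree p; the divided difference of Q over the p + 2 nodes
   x k, 1, y 1, ..., y p vanishes, so splitting off the node x k leaves
   -Q(x k) / ((x k - 1) (prod i=1..p. x k - y i)). *)

definition divided_difference :: "'a::field set \<Rightarrow> ('a \<Rightarrow> 'a) \<Rightarrow> 'a" where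
  "divided_difference A f = (\<Sum>a\<in>A. f a / (\<Prod>b\<in>A - {a}. a - b))"

lemma divided_difference_cong:
  "(\<And>a. a \<in> A \<Longrightarrow> f a = g a) \<Longrightarrow> divided_difference A f = divided_difference A g"
  unfolding divided_difference_def by simp

lemma divided_difference_insert:
  assumes "finite A" "a \<notin> A"
  shows "divided_difference (insert a A) f
       = f a / (\<Prod>b\<in>A. a - b) + divided_difference A (\<lambda>c. f c / (c - a))"
proof -
  have "(\<Prod>b\<in>insert a A - {c}. c - b) = (c - a) * (\<Prod>b\<in>A - {c}. c - b)" if "c \<in> A" for c
  proof -
    have "insert a A - {c} = insert a (A - {c})" using that assms(2) by auto
    then show ?thesis using assms by simp
  qed
  moreover have "insert a A - {a} = A" using assms(2) by auto
  ultimately show ?thesis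
    using assms unfolding divided_difference_def
    by (simp add: divide_divide_eq_left mult.commute)
qed

lemma divided_difference_image:
  assumes "inj_on y I"
  shows "divided_difference (y ` I) f = (\<Sum>j\<in>I. f (y j) / (\<Prod>i\<in>I - {j}. y j - y i))"
proof -
  have "y ` I - {y j} = y ` (I - {j})" if "j \<in> I" for j
    using assms that by (auto simp: inj_on_def)
  moreover have "inj_on y (I - {j})" for j
    using assms by (rule inj_on_subset) auto
  ultimately show ?thesis
    using assms unfolding divided_difference_def by (simp add: sum.reindex prod.reindex)
qed

lemma degree_prod_linear_factors:
  fixes c :: "'i \<Rightarrow> 'a::idom"
  shows "degree (\<Prod>i\<in>I. [:- c i, 1:]) = card I"
  by (subst degree_prod_eq_sum_degree) auto

lemma divided_difference_poly:
  fixes N :: "'a::field poly"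
  assumes A: "finite A" and deg: "degree N < card A"
  shows "divided_difference A (poly N) = coeff N (card A - 1)"
proof -
  define c where "c a = poly N a / (\<Prod>b\<in>A - {a}. a - b)" for a
  define L where "L = (\<Sum>a\<in>A. smult (c a) (\<Prod>b\<in>A - {a}. [:- b, 1:]))"
  have card_remove: "card (A - {a}) = card A - 1" if "a \<in> A" for a
    using that A by simp
  have "degree L \<le> card A - 1"
    unfolding L_def
    by (intro degree_sum_le[OF A] order.trans[OF degree_smult_le])
       (simp add: degree_prod_linear_factors card_remove)
  moreover have "poly L z = poly N z" if z: "z \<in> A" for z
  proof -
    have "(\<Sum>a\<in>A - {z}. c a * (\<Prod>b\<in>A - {a}. z - b)) = 0"
      using A z by (intro sum.neutral ballI) (auto simp: prod_zero_iff)
    then have "poly L z = c z * (\<Prod>b\<in>A - {z}. z - b)"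
      unfolding L_def using A z by (simp add: poly_sum poly_prod sum.remove)
    also have "\<dots> = poly N z"
      unfolding c_def using A by (auto simp: prod_zero_iff)
    finally show ?thesis .
  qed
  ultimately have "L = N"
    using deg by (intro poly_eqI_degree[of A]) auto
  moreover have "coeff L (card A - 1) = (\<Sum>a\<in>A. c a)"
    unfolding L_def coeff_sum
  proof (intro sum.cong refl)
    fix a assume "a \<in> A"
    have "lead_coeff (\<Prod>b\<in>A - {a}. [:- b, 1:]) = 1"
      by (simp add: lead_coeff_prod)
    then show "coeff (smult (c a) (\<Prod>b\<in>A - {a}. [:- b, 1:])) (card A - 1) = c a"
      by (simp add: degree_prod_linear_factors card_remove[OF \<open>a \<in> A\<close>])
  qed
  ultimately show ?thesis
    unfolding divided_difference_def c_def by simp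
qed

lemma divided_difference_poly_eq_0:
  fixes N :: "'a::field poly"
  assumes "finite A" "degree N + 2 \<le> card A"
  shows "divided_difference A (poly N) = 0"
  using assms by (simp add: divided_difference_poly coeff_eq_0)

lemma divided_difference_poly_div_linear:
  fixes Q :: "'a::field poly"
  assumes "finite A" "a \<notin> A" "degree Q < card A"
  shows "divided_difference A (\<lambda>z. poly Q z / (z - a)) = - poly Q a / (\<Prod>b\<in>A. a - b)"
proof -
  have "divided_difference (insert a A) (poly Q) = 0"
    using assms by (intro divided_difference_poly_eq_0) auto
  then show ?thesis
    using assms by (simp add: divided_difference_insert eq_neg_iff_add_eq_0 add.commute)
qed

lemma divided_difference_prod_div_two_factors:
  fixes x :: "'i \<Rightarrow> 'a::field"
  assumes I: "finite I" "n \<in> I" "k \<in> I"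
    and A: "finite A" "card A = card I" "x n \<notin> A" "x k \<notin> A"
  shows "divided_difference A (\<lambda>z. (\<Prod>i\<in>I. z - x i) / ((z - x n) * (z - x k)))
       = (if n = k then - (\<Prod>i\<in>I - {k}. x k - x i) / (\<Prod>b\<in>A. x k - b) else 0)"
proof -
  define Q where "Q = (\<Prod>i\<in>I - {n, k}. [:- x i, 1:])"
  have poly_Q: "poly Q z = (\<Prod>i\<in>I - {n, k}. z - x i)" for z
    unfolding Q_def by (simp add: poly_prod)
  have factor: "(\<Prod>i\<in>I. z - x i) = (\<Prod>i\<in>{n, k}. z - x i) * poly Q z" for z
    unfolding poly_Q mult.commute[of "prod _ {n, k}"] using I by (intro prod.subset_diff) auto
  have deg_Q: "degree Q = card (I - {n, k})"
    unfolding Q_def by (rule degree_prod_linear_factors)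
  show ?thesis
  proof (cases "n = k")
    case True
    have "divided_difference A (\<lambda>z. (\<Prod>i\<in>I. z - x i) / ((z - x n) * (z - x k)))
        = divided_difference A (\<lambda>z. poly Q z / (z - x k))"
      using A True by (intro divided_difference_cong) (auto simp: factor)
    also have "\<dots> = - poly Q (x k) / (\<Prod>b\<in>A. x k - b)"
      using I A True deg_Q card_gt_0_iff[of I] by (intro divided_difference_poly_div_linear) auto
    finally show ?thesis
      using True by (simp add: poly_Q)
  next
    case False
    have "card {n, k} \<le> card I"
      using I by (intro card_mono) auto
    have "divided_difference A (\<lambda>z. (\<Prod>i\<in>I. z - x i) / ((z - x n) * (z - x k)))
        = divided_difference A (poly Q)"
      using A False by (intro divided_difference_cong) (auto simp: factor)
    also have "\<dots> = 0"
      using I A False deg_Q \<open>card {n, k} \<le> card I\<close> by (intro divided_difference_poly_eq_0) auto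
    finally show ?thesis
      using False by simp
  qed
qed

lemma B_summand_eq:
  fixes x y :: "nat \<Rightarrow> 'a::field"
  assumes j: "j \<in> {1..p}"
  shows "((1 - x n) * (1 - x k) * (x 0 - y j) * (y j - x j))
             / ((1 - y j) * (1 - x 0) * (y j - x n) * (y j - x k))
             * (\<Prod>i\<in>{1..p} - {j}. (x i - y j) / (y i - y j))
      = (1 - x n) * (1 - x k) / (1 - x 0)
        * ((\<Prod>i=0..p. y j - x i) / ((y j - x n) * (y j - x k)) / (y j - 1)
           / (\<Prod>i\<in>{1..p} - {j}. y j - y i))"
proof -
  have "(x i - y j) / (y i - y j) = (y j - x i) / (y j - y i)" for i
    by (metis minus_diff_eq minus_divide_divide)
  then have quotient: "(\<Prod>i\<in>{1..p} - {j}. (x i - y j) / (y i - y j))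
      = (\<Prod>i\<in>{1..p} - {j}. y j - x i) / (\<Prod>i\<in>{1..p} - {j}. y j - y i)"
    by (simp add: prod_dividef)
  have node_poly: "- ((x 0 - y j) * (y j - x j) * (\<Prod>i\<in>{1..p} - {j}. y j - x i))
      = (\<Prod>i=0..p. y j - x i)"
    using j by (simp add: prod.atLeast_Suc_atMost prod.remove algebra_simps)
  have "inverse (1 - y j) = - inverse (y j - 1)"
    by (metis inverse_minus_eq minus_diff_eq)
  then have "((1 - x n) * (1 - x k) * (x 0 - y j) * (y j - x j))
             / ((1 - y j) * (1 - x 0) * (y j - x n) * (y j - x k))
             * (\<Prod>i\<in>{1..p} - {j}. (x i - y j) / (y i - y j))
      = (1 - x n) * (1 - x k) / (1 - x 0)
        * (- ((x 0 - y j) * (y j - x j) * (\<Prod>i\<in>{1..p} - {j}. y j - x i))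
           / ((y j - x n) * (y j - x k)) / (y j - 1) / (\<Prod>i\<in>{1..p} - {j}. y j - y i))"
    unfolding quotient by (simp add: divide_inverse inverse_mult_distrib mult_ac)
  then show ?thesis
    unfolding node_poly .
qed

lemma B_eq_divided_difference:
  fixes x y :: "nat \<Rightarrow> 'a::field"
  assumes inj: "inj_on y {1..p}" and y_ne_1: "\<forall>i\<in>{1..p}. y i \<noteq> 1"
    and "x 0 \<noteq> 1" "x n \<noteq> 1" "x k \<noteq> 1"
  shows "(\<Prod>i=1..p. (1 - x i) / (1 - y i))
       + (\<Sum>j=1..p. ((1 - x n) * (1 - x k) * (x 0 - y j) * (y j - x j))
             / ((1 - y j) * (1 - x 0) * (y j - x n) * (y j - x k))
             * (\<Prod>i\<in>{1..p} - {j}. (x i - y j) / (y i - y j)))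
     = (1 - x n) * (1 - x k) / (1 - x 0) * divided_difference (insert 1 (y ` {1..p}))
         (\<lambda>z. (\<Prod>i=0..p. z - x i) / ((z - x n) * (z - x k)))"
    (is "_ = ?C * divided_difference _ ?F")
proof -
  have one_notin: "1 \<notin> y ` {1..p}"
    using y_ne_1 by auto
  have C_F_1: "?C * ?F 1 = (\<Prod>i=1..p. 1 - x i)"
    using assms by (simp add: prod.atLeast_Suc_atMost)
  have "(\<Prod>i=1..p. (1 - x i) / (1 - y i)) = ?C * ?F 1 / (\<Prod>i=1..p. 1 - y i)"
    unfolding C_F_1 by (rule prod_dividef)
  moreover have "((1 - x n) * (1 - x k) * (x 0 - y j) * (y j - x j))
             / ((1 - y j) * (1 - x 0) * (y j - x n) * (y j - x k))
             * (\<Prod>i\<in>{1..p} - {j}. (x i - y j) / (y i - y j))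
      = ?C * (?F (y j) / (y j - 1) / (\<Prod>i\<in>{1..p} - {j}. y j - y i))"
    if "j \<in> {1..p}" for j
    using that by (rule B_summand_eq)
  moreover have "divided_difference (insert 1 (y ` {1..p})) ?F
      = ?F 1 / (\<Prod>i=1..p. 1 - y i)
        + (\<Sum>j=1..p. ?F (y j) / (y j - 1) / (\<Prod>i\<in>{1..p} - {j}. y j - y i))"
    unfolding divided_difference_insert[OF finite_imageI[OF finite_atLeastAtMost] one_notin]
      divided_difference_image[OF inj] prod.reindex[OF inj] by simp
  ultimately show ?thesis
    by (simp add: distrib_left sum_distrib_left)
qed

theorem lemma4:
  fixes p :: nat and x y :: "nat \<Rightarrow> complex" and n k :: nat
  assumes "p \<ge> 1"
    and "inj_on x {0..p}" and "inj_on y {1..p}"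
    and "x ` {0..p} \<inter> y ` {1..p} = {}"
    and "\<forall>i\<in>{0..p}. x i \<noteq> 1" and "\<forall>i\<in>{1..p}. y i \<noteq> 1"
    and "n \<le> p" and "k \<le> p"
  shows "(\<Prod>i=1..p. (1 - x i) / (1 - y i))
       + (\<Sum>j=1..p. ((1 - x n) * (1 - x k) * (x 0 - y j) * (y j - x j))
             / ((1 - y j) * (1 - x 0) * (y j - x n) * (y j - x k))
             * (\<Prod>i\<in>{1..p} - {j}. (x i - y j) / (y i - y j)))
     = (if n = k then ((x k - 1) * (\<Prod>i\<in>{0..p} - {k}. (x k - x i)))
                      / ((x 0 - 1) * (\<Prod>i=1..p. (x k - y i)))
        else 0)"
proof -
  have x_ne_1: "x i \<noteq> 1" if "i \<le> p" for i
    using assms(5) that by simp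
  have x_notin: "x i \<notin> insert 1 (y ` {1..p})" if "i \<le> p" for i
    using assms(4) that x_ne_1 by (force simp: disjoint_iff)
  have one_notin: "1 \<notin> y ` {1..p}"
    using assms(6) by auto
  have prod_nodes: "(\<Prod>b\<in>insert 1 (y ` {1..p}). x k - b) = (x k - 1) * (\<Prod>i=1..p. x k - y i)"
    unfolding prod.insert[OF finite_imageI[OF finite_atLeastAtMost] one_notin]
      prod.reindex[OF assms(3)] by simp
  have divided_difference_nodes: "divided_difference (insert 1 (y ` {1..p}))
      (\<lambda>z. (\<Prod>i=0..p. z - x i) / ((z - x n) * (z - x k)))
    = (if n = k then - (\<Prod>i\<in>{0..p} - {k}. x k - x i) / (\<Prod>b\<in>insert 1 (y ` {1..p}). x k - b)
       else 0)"
    using assms(7,8) one_notin card_image[OF assms(3)] x_notin[OF assms(7)]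
      x_notin[OF assms(8)] by (intro divided_difference_prod_div_two_factors) auto
  note lhs_eq =
    B_eq_divided_difference[OF assms(3,6) x_ne_1[OF le0] x_ne_1[OF assms(7)] x_ne_1[OF assms(8)]]
    divided_difference_nodes prod_nodes
  show ?thesis
  proof (cases "n = k")
    case True
    have "(\<Prod>i=1..p. x k - y i) \<noteq> 0"
      using x_notin[OF assms(8)] by (auto simp: prod_zero_iff)
    moreover have "(1 - a) * (1 - a) / (1 - c) * (- q / ((a - 1) * Y)) = (a - 1) * q / ((c - 1) * Y)"
      if "a \<noteq> 1" "c \<noteq> 1" "Y \<noteq> 0" for a c q Y :: complex
      using that by (simp add: divide_simps) (simp add: algebra_simps)
    ultimately show ?thesis
      unfolding lhs_eq unfolding True if_P[OF refl]
      using x_ne_1[OF assms(8)] x_ne_1[OF le0] by blast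
  next
    case False
    show ?thesis
      unfolding lhs_eq if_not_P[OF False] by simp
  qed
qed

end
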